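(* Let $G=(V,E)$ be a finite simple graph with $|E|=2|V|-3$. Then the graphic matroid of $G$ has a rainbow circuit-free coloring using each color at most twice if and only if $G$ can be constructed from $K_2$ (a single edge) by a sequence of (H0) operations.
   Context: The graphic matroid of $G$ has ground set $E$, independent sets being the edge sets of forests; its circuits are the edge sets of cycles. A coloring of $E$ is a partition into nonempty color classes; it is rainbow circuit-free if no cycle of $G$ has all its edges of pairwise different colors. The (H0) operation on a graph adds a new vertex $z$ together with edges $uz$ and $vz$, where $u,v$ are two distinct already existing vertices. *)

theory Defs
  imports Main
begin

definition simple_graph :: "'a set \<Rightarrow> 'a set set \<Rightarrow> bool" where
  "simple_graph V E \<longleftrightarrow> finite V \<and>
     (\<forall>e\<in>E. \<exists>u v. u \<in> V \<and> v \<in> V \<and> u \<noteq> v \<and> e = {u, v})"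

definition cycle_edges :: "'a list \<Rightarrow> 'a set set" where
  "cycle_edges vs = {{vs ! i, vs ! ((i + 1) mod length vs)} | i. i < length vs}"

text \<open>C is the edge set of a cycle of the graph (a circuit of the graphic matroid).\<close>
definition is_cycle :: "'a set set \<Rightarrow> 'a set set \<Rightarrow> bool" where
  "is_cycle E C \<longleftrightarrow> (\<exists>vs. distinct vs \<and> length vs \<ge> 3 \<and>
      cycle_edges vs \<subseteq> E \<and> C = cycle_edges vs)"

text \<open>A coloring of E: a partition of E into nonempty colour classes.\<close>
definition coloring :: "'a set set \<Rightarrow> 'a set set set \<Rightarrow> bool" where
  "coloring E P \<longleftrightarrow> \<Union>P = E \<and> {} \<notin> P \<and>
     (\<forall>X\<in>P. \<forall>Y\<in>P. X \<noteq> Y \<longrightarrow> X \<inter> Y = {})"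

definition rainbow_circuit_free :: "'a set set \<Rightarrow> 'a set set set \<Rightarrow> bool" where
  "rainbow_circuit_free E P \<longleftrightarrow>
     \<not> (\<exists>C. is_cycle E C \<and> (\<forall>X\<in>P. card (C \<inter> X) \<le> 1))"

inductive H0_constructible :: "'a set \<Rightarrow> 'a set set \<Rightarrow> bool" where
  K2: "u \<noteq> v \<Longrightarrow> H0_constructible {u, v} {{u, v}}"
| H0: "H0_constructible V E \<Longrightarrow> u \<in> V \<Longrightarrow> v \<in> V \<Longrightarrow> u \<noteq> v \<Longrightarrow> z \<notin> V \<Longrightarrow>
       H0_constructible (insert z V) (E \<union> {{u, z}, {v, z}})"

end

theory Submission
  imports Defs
begin

(* Suppose E has a rainbow circuit-free colouring P with classes of size at most two.
   Picking one edge from each class gives a rainbow, hence acyclic, edge set, so |P| < |V|;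
   as |E| = 2|V| - 3 this forces |P| = |V| - 1.  Picking edges that avoid a vertex x shows
   in the same way that some class has x as a common vertex of all its edges, and double
   counting then shows that every vertex is the common vertex of exactly one class.  Orient
   every edge of a two-edge class towards the common vertex of the class.  If no vertex w
   had exactly the two edges of its own class, every such vertex would have an outgoing
   edge, and following outgoing edges would close a directed cycle whose edges all have
   different colours.  So such a w exists; deleting w and its class undoes an (H0) step,
   and induction applies.  Conversely, the two edges added by an (H0) step form a new
   class, and every cycle through the new vertex uses both of them. *)

section \<open>Cycles and forests\<close>

lemma simple_graph_edgeE:
  assumes "simple_graph V E" "e \<in> E"
  obtains u v where "u \<in> V" "v \<in> V" "u \<noteq> v" "e = {u, v}"
  using assms unfolding simple_graph_def by blast

lemma simple_graph_edge_subset: "simple_graph V E \<Longrightarrow> e \<in> E \<Longrightarrow> e \<subseteq> V"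
  by (metis simple_graph_edgeE empty_subsetI insert_subset)

lemma simple_graph_finite: "simple_graph V E \<Longrightarrow> finite V"
  unfolding simple_graph_def by blast

lemma simple_graph_finite_edges:
  assumes "simple_graph V E"
  shows "finite E"
proof -
  have "E \<subseteq> Pow V" using simple_graph_edge_subset[OF assms] by blast
  then show ?thesis using simple_graph_finite[OF assms] by (simp add: finite_subset)
qed

lemma simple_graph_subset: "simple_graph V E \<Longrightarrow> F \<subseteq> E \<Longrightarrow> simple_graph V F"
  unfolding simple_graph_def by blast

lemma doubleton_inter_unique:
  "{a, b} \<noteq> {c, d} \<Longrightarrow> x \<in> {a, b} \<inter> {c, d} \<Longrightarrow> y \<in> {a, b} \<inter> {c, d} \<Longrightarrow> x = y"
  by auto

lemma Suc_mod_inj: "i < n \<Longrightarrow> j < n \<Longrightarrow> Suc i mod n = Suc j mod n \<Longrightarrow> i = j"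
  by (auto simp: mod_Suc split: if_splits)

lemma is_cycle_mono: "is_cycle F C \<Longrightarrow> F \<subseteq> G \<Longrightarrow> is_cycle G C"
  unfolding is_cycle_def by blast

lemma cycle_edges_subset_set: "e \<in> cycle_edges vs \<Longrightarrow> e \<subseteq> set vs"
  unfolding cycle_edges_def
  by (auto intro!: nth_mem) (metis length_pos_if_in_set mod_less_divisor nth_mem)

lemma successively_take: "successively R xs \<Longrightarrow> successively R (take n xs)"
  using successively_append_iff[of R "take n xs" "drop n xs"] by simp

lemma successively_drop: "successively R xs \<Longrightarrow> successively R (drop n xs)"
  using successively_append_iff[of R "take n xs" "drop n xs"] by simp

lemma successively_closed_nth:
  assumes "successively R vs" "R (last vs) (hd vs)" "i < length vs"
  shows "R (vs ! i) (vs ! ((i + 1) mod length vs))"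
proof (cases "Suc i < length vs")
  case True
  then show ?thesis using assms(1) by (simp add: successively_nth)
next
  case False
  then have "Suc i = length vs" using assms(3) by simp
  then have "i = length vs - 1" "(i + 1) mod length vs = 0" "vs \<noteq> []" by auto
  then show ?thesis using assms(2,3) by (simp add: hd_conv_nth last_conv_nth)
qed

lemma is_cycle_closed_path:
  assumes "distinct vs" "3 \<le> length vs" "successively (\<lambda>a b. {a, b} \<in> F) vs"
    and "{last vs, hd vs} \<in> F"
  shows "is_cycle F (cycle_edges vs)"
  using assms successively_closed_nth[OF assms(3)]
  unfolding is_cycle_def cycle_edges_def by blast

lemma cycle_edges_two_at_vertex:
  assumes "distinct vs" "3 \<le> length vs" "z \<in> set vs"
  obtains c d where "c \<in> cycle_edges vs" "d \<in> cycle_edges vs" "c \<noteq> d" "z \<in> c" "z \<in> d"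
proof -
  define n where "n = length vs"
  obtain k where k: "k < n" "vs ! k = z" using assms(3) unfolding n_def by (auto simp: in_set_conv_nth)
  define j where "j = (if k = 0 then n - 1 else k - 1)"
  have j: "j < n" "Suc j mod n = k" using k(1) unfolding j_def by auto
  have "Suc k mod n \<noteq> j" using k(1) assms(2) unfolding j_def n_def by (auto simp: mod_if)
  moreover have "Suc k mod n < n" using k(1) by simp
  ultimately have "vs ! (Suc k mod n) \<noteq> vs ! j"
    using assms(1) j(1) unfolding n_def by (simp add: nth_eq_iff_index_eq)
  then have "{vs ! k, vs ! (Suc k mod n)} \<noteq> {vs ! j, vs ! (Suc j mod n)}"
    using j(2) by (metis doubleton_eq_iff)
  moreover have "{vs ! i, vs ! (Suc i mod n)} \<in> cycle_edges vs" if "i < n" for i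
    using that unfolding cycle_edges_def n_def by auto
  ultimately show thesis using that k j by (metis insertI1 insertI2 singletonI)
qed

lemma not_is_cycle_singleton: "\<not> is_cycle {e} C"
proof
  assume "is_cycle {e} C"
  then obtain vs where vs: "distinct vs" "3 \<le> length vs" "cycle_edges vs \<subseteq> {e}"
    unfolding is_cycle_def by blast
  then have "hd vs \<in> set vs" by (intro hd_in_set) auto
  then obtain c d where "c \<in> cycle_edges vs" "d \<in> cycle_edges vs" "c \<noteq> d"
    using cycle_edges_two_at_vertex[OF vs(1,2)] by metis
  then show False using vs(3) by blast
qed

lemma longest_distinct_listE:
  assumes "finite W" "Q xs\<^sub>0" "\<And>xs. Q xs \<Longrightarrow> distinct xs \<and> set xs \<subseteq> W"
  obtains xs where "Q xs" "\<And>ys. Q ys \<Longrightarrow> length ys \<le> length xs"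
proof -
  have "\<forall>xs. Q xs \<longrightarrow> length xs < card W + 1"
    using assms(3) card_mono[OF assms(1)] by (metis distinct_card le_imp_less_Suc Suc_eq_plus1)
  then show thesis
    using Lattices_Big.ex_has_greatest_nat[of Q xs\<^sub>0 length] assms(2) that by metis
qed

lemma acyclic_leafE:
  assumes sg: "simple_graph V F" and acyclic: "\<nexists>C. is_cycle F C" and "F \<noteq> {}"
  obtains v e where "e \<in> F" "v \<in> e" "\<And>e'. e' \<in> F \<Longrightarrow> v \<in> e' \<Longrightarrow> e' = e"
proof -
  define path where "path vs \<longleftrightarrow> distinct vs \<and> set vs \<subseteq> V \<and> 2 \<le> length vs \<and>
    successively (\<lambda>a b. {a, b} \<in> F) vs" for vs
  obtain e\<^sub>0 where "e\<^sub>0 \<in> F" using \<open>F \<noteq> {}\<close> by blast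
  then obtain a b where "a \<in> V" "b \<in> V" "a \<noteq> b" "{a, b} \<in> F"
    using sg by (metis simple_graph_edgeE)
  then have "path [a, b]" unfolding path_def by simp
  then obtain vs where vs: "path vs" and longest: "\<And>ws. path ws \<Longrightarrow> length ws \<le> length vs"
    using longest_distinct_listE[OF simple_graph_finite[OF sg], of path] unfolding path_def by blast
  have vs_len: "2 \<le> length vs" and vs_F: "successively (\<lambda>a b. {a, b} \<in> F) vs"
    using vs unfolding path_def by auto
  define v where "v = hd vs"
  define e where "e = {vs ! 0, vs ! 1}"
  have v: "v = vs ! 0" unfolding v_def using vs_len by (cases vs) auto
  have "e \<in> F" unfolding e_def using successively_nth[OF vs_F, of 0] vs_len by simp
  moreover have "v \<in> e" unfolding e_def v by simp
  moreover have "e' = e" if e': "e' \<in> F" "v \<in> e'" for e'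
  proof (rule ccontr)
    assume "e' \<noteq> e"
    obtain x where x: "e' = {v, x}" "x \<in> V" "x \<noteq> v"
      using simple_graph_edgeE[OF sg e'(1)] e'(2) by (metis doubleton_eq_iff insertE singletonD)
    show False
    proof (cases "x \<in> set vs")
      case False
      then have "path (x # vs)"
        using vs x e'(1) unfolding path_def v_def by (auto simp: successively_Cons insert_commute)
      then show False using longest by fastforce
    next
      case True
      then obtain j where j: "j < length vs" "vs ! j = x" by (auto simp: in_set_conv_nth)
      have "j \<noteq> 0" using j(2) x(3) v by metis
      moreover have "j \<noteq> 1" using j x(1) \<open>e' \<noteq> e\<close> unfolding e_def v by auto
      moreover have "last (take (Suc j) vs) = x" using j by (simp add: take_Suc_conv_app_nth)
      moreover have "hd (take (Suc j) vs) = v" unfolding v_def by simp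
      ultimately have "is_cycle F (cycle_edges (take (Suc j) vs))"
        using vs j(1) e'(1) x(1) unfolding path_def
        by (intro is_cycle_closed_path) (auto simp: successively_take insert_commute)
      then show False using acyclic by blast
    qed
  qed
  ultimately show thesis using that by blast
qed

lemma acyclic_card_less_card_Union:
  assumes "simple_graph V F" "\<nexists>C. is_cycle F C" "F \<noteq> {}"
  shows "card F < card (\<Union>F)"
  using assms
proof (induction "card F" arbitrary: F rule: less_induct)
  case less
  obtain v e where e: "e \<in> F" "v \<in> e" and leaf: "\<And>e'. e' \<in> F \<Longrightarrow> v \<in> e' \<Longrightarrow> e' = e"
    using acyclic_leafE[OF less.prems] by metis
  have fin: "finite F" using simple_graph_finite_edges[OF less.prems(1)] .
  have fin_Union: "finite (\<Union>F)"
    using less.prems(1) simple_graph_finite simple_graph_edge_subset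
    by (metis Union_least finite_subset)
  show ?case
  proof (cases "F = {e}")
    case True
    then show ?thesis using simple_graph_edgeE[OF less.prems(1) e(1)] by fastforce
  next
    case False
    have "card (F - {e}) < card (\<Union>(F - {e}))"
    proof (rule less.hyps)
      show "card (F - {e}) < card F" using fin e(1) by (rule card_Diff1_less)
      show "simple_graph V (F - {e})" using less.prems(1) by (rule simple_graph_subset) blast
      show "\<nexists>C. is_cycle (F - {e}) C" using less.prems(2) is_cycle_mono by blast
      show "F - {e} \<noteq> {}" using False e(1) by blast
    qed
    also have "card (\<Union>(F - {e})) \<le> card (\<Union>F - {v})"
      using leaf fin_Union by (intro card_mono) auto
    also have "\<dots> = card (\<Union>F) - 1" using e by (intro card_Diff_singleton) auto
    finally show ?thesis using fin e(1) by (simp add: card_Diff_singleton card_gt_0_iff)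
  qed
qed

lemma finite_successor_cycleE:
  assumes "finite W" "w \<in> W" "\<And>x. x \<in> W \<Longrightarrow> \<exists>y\<in>W. R x y"
  obtains vs where "vs \<noteq> []" "distinct vs" "set vs \<subseteq> W" "successively R vs" "R (last vs) (hd vs)"
proof -
  define path where "path vs \<longleftrightarrow> vs \<noteq> [] \<and> distinct vs \<and> set vs \<subseteq> W \<and> successively R vs"
    for vs
  have "path [w]" unfolding path_def using assms(2) by simp
  then obtain vs where vs: "path vs" and longest: "\<And>ws. path ws \<Longrightarrow> length ws \<le> length vs"
    using longest_distinct_listE[OF assms(1), of path] unfolding path_def by blast
  then have "last vs \<in> W" unfolding path_def by auto
  then obtain y where y: "y \<in> W" "R (last vs) y" using assms(3) by blast
  have "y \<in> set vs"
  proof (rule ccontr)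
    assume "y \<notin> set vs"
    then have "path (vs @ [y])" using vs y unfolding path_def by (simp add: successively_append_iff)
    then show False using longest by fastforce
  qed
  then obtain j where j: "j < length vs" "vs ! j = y" by (auto simp: in_set_conv_nth)
  show thesis
  proof (rule that[of "drop j vs"])
    show "R (last (drop j vs)) (hd (drop j vs))" using j y(2) by (simp add: hd_drop_conv_nth)
  qed (use vs j in \<open>auto simp: path_def successively_drop dest: in_set_dropD\<close>)
qed

section \<open>Colourings\<close>

lemma coloring_class_subset: "coloring E P \<Longrightarrow> X \<in> P \<Longrightarrow> X \<subseteq> E"
  unfolding coloring_def by blast

lemma coloring_class_unique: "coloring E P \<Longrightarrow> X \<in> P \<Longrightarrow> Y \<in> P \<Longrightarrow> e \<in> X \<Longrightarrow> e \<in> Y \<Longrightarrow> X = Y"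
  unfolding coloring_def by blast

lemma coloring_insert_class:
  "coloring E P \<Longrightarrow> A \<noteq> {} \<Longrightarrow> A \<inter> E = {} \<Longrightarrow> coloring (E \<union> A) (insert A P)"
  unfolding coloring_def by blast

lemma coloring_Diff_class: "coloring E P \<Longrightarrow> X \<in> P \<Longrightarrow> coloring (E - X) (P - {X})"
  unfolding coloring_def by blast

lemma rainbow_circuit_free_Diff_class:
  assumes "rainbow_circuit_free E P"
  shows "rainbow_circuit_free (E - X) (P - {X})"
  unfolding rainbow_circuit_free_def
proof
  assume "\<exists>C. is_cycle (E - X) C \<and> (\<forall>Y\<in>P - {X}. card (C \<inter> Y) \<le> 1)"
  then obtain C where C: "is_cycle (E - X) C" "\<forall>Y\<in>P - {X}. card (C \<inter> Y) \<le> 1" by blast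
  then have "C \<inter> X = {}" unfolding is_cycle_def by blast
  then have "card (C \<inter> Y) \<le> 1" if "Y \<in> P" for Y
    using C(2) that by (cases "Y = X") auto
  moreover have "is_cycle E C" using C(1) by (rule is_cycle_mono) blast
  ultimately show False using assms unfolding rainbow_circuit_free_def by blast
qed

lemma rainbow_circuit_free_insert_vertex:
  assumes rf: "rainbow_circuit_free E P" and z: "\<forall>e\<in>E. z \<notin> e"
  shows "rainbow_circuit_free (E \<union> {{u, z}, {v, z}}) (insert {{u, z}, {v, z}} P)"
  unfolding rainbow_circuit_free_def
proof
  define A where "A = {{u, z}, {v, z}}"
  assume "\<exists>C. is_cycle (E \<union> {{u, z}, {v, z}}) C \<and>
    (\<forall>X\<in>insert {{u, z}, {v, z}} P. card (C \<inter> X) \<le> 1)"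
  then obtain vs where vs: "distinct vs" "3 \<le> length vs" "cycle_edges vs \<subseteq> E \<union> A"
    and rainbow: "\<forall>X\<in>insert A P. card (cycle_edges vs \<inter> X) \<le> 1"
    unfolding is_cycle_def A_def by blast
  show False
  proof (cases "z \<in> set vs")
    case True
    then obtain c d where "c \<in> cycle_edges vs" "d \<in> cycle_edges vs" "c \<noteq> d" "z \<in> c" "z \<in> d"
      by (rule cycle_edges_two_at_vertex[OF vs(1,2)])
    then have "{c, d} \<subseteq> cycle_edges vs \<inter> A" using vs(3) z by auto
    then have "card {c, d} \<le> card (cycle_edges vs \<inter> A)" by (rule card_mono[rotated]) (simp add: A_def)
    then show False using rainbow \<open>c \<noteq> d\<close> by simp
  next
    case False
    then have "cycle_edges vs \<subseteq> E"
      using vs(3) cycle_edges_subset_set unfolding A_def by blast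
    then have "is_cycle E (cycle_edges vs)" using vs(1,2) unfolding is_cycle_def by blast
    then show False using rf rainbow unfolding rainbow_circuit_free_def by blast
  qed
qed

lemma rainbow_circuit_free_subset_acyclic:
  assumes "rainbow_circuit_free E P" "T \<subseteq> E" "finite T" "\<forall>X\<in>P. card (T \<inter> X) \<le> 1"
  shows "\<nexists>C. is_cycle T C"
proof
  assume "\<exists>C. is_cycle T C"
  then obtain C where C: "is_cycle T C" by blast
  then have "C \<subseteq> T" unfolding is_cycle_def by blast
  then have "card (C \<inter> X) \<le> 1" if "X \<in> P" for X
    using card_mono[of "T \<inter> X" "C \<inter> X"] assms(3,4) that by fastforce
  moreover have "is_cycle E C" using C assms(2) by (rule is_cycle_mono)
  ultimately show False using assms(1) unfolding rainbow_circuit_free_def by blast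
qed

section \<open>(H0)-constructible graphs have rainbow circuit-free colourings\<close>

lemma H0_constructible_edge_subset: "H0_constructible V E \<Longrightarrow> e \<in> E \<Longrightarrow> e \<subseteq> V"
  by (induction rule: H0_constructible.induct) auto

lemma H0_constructible_rainbow_coloring:
  "H0_constructible V E \<Longrightarrow> \<exists>P. coloring E P \<and> rainbow_circuit_free E P \<and> (\<forall>X\<in>P. card X \<le> 2)"
proof (induction rule: H0_constructible.induct)
  case (K2 u v)
  have "coloring ({} \<union> {{u, v}}) (insert {{u, v}} {})"
    by (rule coloring_insert_class) (auto simp: coloring_def)
  moreover have "rainbow_circuit_free {{u, v}} {{{u, v}}}"
    unfolding rainbow_circuit_free_def using not_is_cycle_singleton by blast
  ultimately show ?case by auto
next
  case (H0 V E u v z)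
  then obtain P where P: "coloring E P" "rainbow_circuit_free E P" "\<forall>X\<in>P. card X \<le> 2" by blast
  have z: "\<forall>e\<in>E. z \<notin> e" using H0.hyps(1,5) H0_constructible_edge_subset by blast
  have "coloring (E \<union> {{u, z}, {v, z}}) (insert {{u, z}, {v, z}} P)"
    using z by (intro coloring_insert_class[OF P(1)]) auto
  moreover have "rainbow_circuit_free (E \<union> {{u, z}, {v, z}}) (insert {{u, z}, {v, z}} P)"
    using P(2) z by (rule rainbow_circuit_free_insert_vertex)
  moreover have "card {{u, z}, {v, z}} \<le> 2" by (simp add: card_insert_if)
  ultimately show ?case using P(3) by blast
qed

section \<open>Rainbow circuit-free colourings of graphs with 2|V| - 3 edges\<close>

definition common_vertex :: "'a set set \<Rightarrow> 'a \<Rightarrow> bool" where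
  "common_vertex X x \<longleftrightarrow> (\<forall>e\<in>X. x \<in> e)"

locale tight_rainbow_coloring =
  fixes V :: "'a set" and E :: "'a set set" and P :: "'a set set set"
  assumes simple: "simple_graph V E"
    and colors: "coloring E P"
    and rainbow_free: "rainbow_circuit_free E P"
    and card_class_le_2: "\<forall>X\<in>P. card X \<le> 2"
    and card_E: "card E + 3 = 2 * card V"
begin

lemma finite_V: "finite V"
  using simple by (rule simple_graph_finite)

lemma finite_E: "finite E"
  using simple by (rule simple_graph_finite_edges)

lemma class_subset: "X \<in> P \<Longrightarrow> X \<subseteq> E"
  using colors by (rule coloring_class_subset)

lemma class_unique: "X \<in> P \<Longrightarrow> Y \<in> P \<Longrightarrow> e \<in> X \<Longrightarrow> e \<in> Y \<Longrightarrow> X = Y"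
  using colors by (rule coloring_class_unique)

lemma edge_in_class: "e \<in> E \<Longrightarrow> \<exists>Y\<in>P. e \<in> Y"
  using colors unfolding coloring_def by blast

lemma class_nonempty: "X \<in> P \<Longrightarrow> X \<noteq> {}"
  using colors unfolding coloring_def by blast

lemma finite_P: "finite P"
  using finite_E class_subset by (metis Pow_iff finite_Pow_iff finite_subset subsetI)

lemma finite_class: "X \<in> P \<Longrightarrow> finite X"
  using finite_E class_subset by (rule finite_subset[rotated])

lemma card_E_sum: "card E = (\<Sum>X\<in>P. card X)"
proof -
  have "\<Union>P = E" using colors unfolding coloring_def by blast
  moreover have "pairwise disjnt P" using colors unfolding coloring_def pairwise_def disjnt_def by blast
  ultimately show ?thesis using card_Union_disjoint finite_class by metis
qed

lemma classes_nonempty: "P \<noteq> {}"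
proof
  assume "P = {}"
  then have "2 * card V = 3" using card_E card_E_sum by simp
  then show False by presburger
qed

text \<open>A choice of one edge per class is a rainbow edge set, hence a forest.\<close>

lemma card_classes_less:
  assumes "finite S" and inside: "\<And>X. X \<in> P \<Longrightarrow> \<exists>e\<in>X. e \<subseteq> S"
  shows "card P < card S"
proof -
  obtain pick where pick: "\<And>X. X \<in> P \<Longrightarrow> pick X \<in> X \<and> pick X \<subseteq> S"
    using inside by metis
  define T where "T = pick ` P"
  have T_E: "T \<subseteq> E" unfolding T_def using pick class_subset by blast
  have "T \<noteq> {}" unfolding T_def using classes_nonempty by blast
  moreover have "finite T" using T_E finite_E finite_subset by blast
  moreover have "card (T \<inter> X) \<le> 1" if "X \<in> P" for X
  proof -
    have "T \<inter> X \<subseteq> {pick X}" using that pick class_unique unfolding T_def by blast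
    then show ?thesis using card_mono[of "{pick X}" "T \<inter> X"] by simp
  qed
  ultimately have "card T < card (\<Union>T)"
    using rainbow_circuit_free_subset_acyclic[OF rainbow_free T_E] simple_graph_subset[OF simple T_E]
    by (intro acyclic_card_less_card_Union) blast+
  moreover have "card T = card P"
    unfolding T_def using pick class_unique by (intro card_image inj_onI) metis
  moreover have "card (\<Union>T) \<le> card S"
    using pick assms(1) unfolding T_def by (intro card_mono) auto
  ultimately show ?thesis by linarith
qed

lemma card_classes: "card P + 1 = card V"
proof -
  have inside: "\<exists>e\<in>X. e \<subseteq> V" if "X \<in> P" for X
    using class_nonempty[OF that] class_subset[OF that] simple_graph_edge_subset[OF simple] by blast
  have "card P < card V" using finite_V by (intro card_classes_less inside)
  moreover have "(\<Sum>X\<in>P. card X) \<le> (\<Sum>X\<in>P. 2)"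
    using card_class_le_2 by (intro sum_mono) blast
  then have "card E \<le> 2 * card P" using card_E_sum by simp
  ultimately show ?thesis using card_E by linarith
qed

lemma vertex_has_class: "x \<in> V \<Longrightarrow> \<exists>X\<in>P. common_vertex X x"
proof (rule ccontr)
  assume x: "x \<in> V" "\<not> (\<exists>X\<in>P. common_vertex X x)"
  have avoid: "\<exists>e\<in>X. e \<subseteq> V - {x}" if X: "X \<in> P" for X
  proof -
    obtain e where "e \<in> X" "x \<notin> e" using x(2) X unfolding common_vertex_def by blast
    moreover have "e \<subseteq> V" using class_subset[OF X] \<open>e \<in> X\<close> simple_graph_edge_subset[OF simple] by blast
    ultimately show ?thesis by blast
  qed
  have "card P < card (V - {x})" using finite_V by (intro card_classes_less avoid) simp_all
  then show False using card_classes card_Diff_singleton[OF \<open>x \<in> V\<close>] by linarith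
qed

lemma pair_class_common_vertex_unique:
  assumes "X \<in> P" "card X = 2" "common_vertex X x" "common_vertex X y"
  shows "x = y"
proof -
  obtain e e' where X: "X = {e, e'}" "e \<noteq> e'" using assms(2) by (meson card_2_iff)
  have "e \<in> E" "e' \<in> E" using X(1) class_subset[OF assms(1)] by auto
  then obtain a b c d where "e = {a, b}" "e' = {c, d}" using simple_graph_edgeE[OF simple] by metis
  moreover have "x \<in> e \<inter> e'" "y \<in> e \<inter> e'" using X(1) assms(3,4) unfolding common_vertex_def by auto
  ultimately show ?thesis using X(2) by (metis doubleton_inter_unique)
qed

lemma card_common_vertices_le:
  assumes "X \<in> P"
  shows "card {x\<in>V. common_vertex X x} + card X \<le> 3"
proof -
  obtain e where e: "e \<in> X" using class_nonempty[OF assms] by blast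
  then have "e \<in> E" using class_subset[OF assms] by blast
  then obtain a b where ab: "a \<noteq> b" "e = {a, b}" using simple_graph_edgeE[OF simple] by metis
  have "card X \<noteq> 0" using finite_class[OF assms] e by auto
  moreover have "card X \<le> 2" using card_class_le_2 assms by blast
  ultimately have "card X = 1 \<or> card X = 2" by linarith
  then show ?thesis
  proof
    assume "card X = 1"
    then have "X = {e}" using e card_1_singletonE by blast
    then have "{x\<in>V. common_vertex X x} \<subseteq> e" unfolding common_vertex_def by blast
    then have "card {x\<in>V. common_vertex X x} \<le> card e" using ab by (intro card_mono) simp_all
    then show ?thesis using \<open>card X = 1\<close> ab by simp
  next
    assume "card X = 2"
    have "finite {x\<in>V. common_vertex X x}" using finite_V by simp
    then have "card {x\<in>V. common_vertex X x} \<le> Suc 0"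
      using pair_class_common_vertex_unique[OF assms \<open>card X = 2\<close>]
      by (subst card_le_Suc0_iff_eq) blast+
    then show ?thesis using \<open>card X = 2\<close> by simp
  qed
qed

text \<open>Count the pairs (x, X) with x a common vertex of X: every vertex is in at least one
  pair and every class X in at most 3 - |X|.  Since |P| = |V| - 1 and |E| = 2|V| - 3,
  both bounds sum to |V|, so both hold with equality.\<close>

lemma common_vertex_counts:
  shows "x \<in> V \<Longrightarrow> card {X\<in>P. common_vertex X x} = 1"
    and "X \<in> P \<Longrightarrow> card {x\<in>V. common_vertex X x} + card X = 3"
proof -
  define deg where "deg x = card {X\<in>P. common_vertex X x}" for x
  define cv where "cv X = card {x\<in>V. common_vertex X x}" for X
  have deg_ge: "1 \<le> deg x" if "x \<in> V" for x
    using vertex_has_class[OF that] finite_P unfolding deg_def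
    by (simp add: Suc_le_eq card_gt_0_iff) blast
  have cv_le: "cv X + card X \<le> 3" if "X \<in> P" for X
    using card_common_vertices_le[OF that] unfolding cv_def .
  have deg_sum: "card V \<le> (\<Sum>x\<in>V. deg x)"
    using sum_mono[of V "\<lambda>_. 1" deg] deg_ge by simp
  have swap: "(\<Sum>x\<in>V. deg x) = (\<Sum>X\<in>P. cv X)"
    unfolding deg_def cv_def card_eq_sum by (rule sum.swap_restrict[OF finite_V finite_P])
  have cv_sum: "(\<Sum>X\<in>P. cv X + card X) \<le> (\<Sum>X\<in>P. 3)"
    using cv_le by (intro sum_mono)
  have "(\<Sum>X\<in>P. cv X + card X) = (\<Sum>X\<in>P. cv X) + card E"
    by (simp add: sum.distrib card_E_sum)
  then have deg_eq: "(\<Sum>x\<in>V. 1) = (\<Sum>x\<in>V. deg x)"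
    and cv_eq: "(\<Sum>X\<in>P. cv X + card X) = (\<Sum>X\<in>P. 3)"
    using deg_sum swap cv_sum card_E card_classes by simp_all
  show "card {X\<in>P. common_vertex X x} = 1" if "x \<in> V"
    using sum_mono_inv[OF deg_eq deg_ge that finite_V] unfolding deg_def by simp
  show "card {x\<in>V. common_vertex X x} + card X = 3" if "X \<in> P"
    using sum_mono_inv[OF cv_eq cv_le that finite_P] unfolding cv_def by simp
qed

lemma common_class_unique:
  assumes "x \<in> V" "X \<in> P" "Y \<in> P" "common_vertex X x" "common_vertex Y x"
  shows "X = Y"
proof -
  have "finite {X\<in>P. common_vertex X x}" using finite_P by simp
  moreover have "card {X\<in>P. common_vertex X x} \<le> Suc 0" using common_vertex_counts(1)[OF assms(1)] by simp
  ultimately show ?thesis using assms(2-5) by (subst (asm) card_le_Suc0_iff_eq) blast+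
qed

lemma class_has_common_vertex:
  assumes "X \<in> P"
  shows "\<exists>x\<in>V. common_vertex X x"
proof -
  have "card {x\<in>V. common_vertex X x} \<noteq> 0"
    using common_vertex_counts(2)[OF assms] card_class_le_2 assms by auto
  then show ?thesis by (metis (no_types, lifting) card.empty empty_Collect_eq)
qed

definition points_to :: "'a \<Rightarrow> 'a \<Rightarrow> bool" where
  "points_to x y \<longleftrightarrow> (\<exists>Y\<in>P. card Y = 2 \<and> common_vertex Y y \<and> {x, y} \<in> Y)"

lemma points_to_successor:
  assumes w: "w \<in> V" and X: "X \<in> P" "card X = 2" "common_vertex X w"
    and not_deg2: "{e\<in>E. w \<in> e} \<noteq> X"
  shows "\<exists>y\<in>V. points_to w y"
proof -
  have "X \<subseteq> {e\<in>E. w \<in> e}" using class_subset[OF X(1)] X(3) unfolding common_vertex_def by blast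
  then obtain g where g: "g \<in> E" "w \<in> g" "g \<notin> X" using not_deg2 by blast
  then obtain Y where Y: "Y \<in> P" "g \<in> Y" using edge_in_class by blast
  then obtain y where y: "y \<in> V" "common_vertex Y y" using class_has_common_vertex by blast
  have Y_X: "\<not> common_vertex Y w" using common_class_unique[OF w Y(1) X(1)] X(3) g(3) Y(2) by blast
  then have "y \<noteq> w" using y(2) by blast
  moreover have "y \<in> g" using y(2) Y(2) unfolding common_vertex_def by blast
  moreover obtain a b where "g = {a, b}" using simple_graph_edgeE[OF simple g(1)] by metis
  ultimately have g_wy: "g = {w, y}" using g(2) by auto
  have "card Y \<noteq> 1"
  proof
    assume "card Y = 1"
    then have "Y = {g}" using Y(2) card_1_singletonE by blast
    then show False using Y_X g(2) unfolding common_vertex_def by blast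
  qed
  moreover have "card Y \<noteq> 0" using finite_class[OF Y(1)] Y(2) by auto
  ultimately have "card Y = 2" using card_class_le_2 Y(1) by fastforce
  then show ?thesis using Y y g_wy unfolding points_to_def by blast
qed

lemma points_to_edge: "points_to a b \<Longrightarrow> {a, b} \<in> E"
  unfolding points_to_def using class_subset by blast

lemma points_to_neq:
  assumes "points_to a b"
  shows "a \<noteq> b"
proof -
  obtain u v where "u \<noteq> v" "{a, b} = {u, v}"
    using simple_graph_edgeE[OF simple points_to_edge[OF assms]] by metis
  then show ?thesis by auto
qed

lemma points_to_same_class:
  assumes "points_to a b" "points_to c d" "X \<in> P" "{a, b} \<in> X" "{c, d} \<in> X"
  shows "b = d"
proof -
  obtain Y where Y: "Y \<in> P" "card Y = 2" "common_vertex Y b" "{a, b} \<in> Y"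
    using assms(1) unfolding points_to_def by blast
  obtain Z where Z: "Z \<in> P" "common_vertex Z d" "{c, d} \<in> Z"
    using assms(2) unfolding points_to_def by blast
  have "Y = X" using class_unique[OF Y(1) assms(3) Y(4) assms(4)] .
  moreover have "Z = X" using class_unique[OF Z(1) assms(3) Z(3) assms(5)] .
  ultimately show ?thesis using pair_class_common_vertex_unique Y(1-3) Z(2) by metis
qed

lemma points_to_cycle_classes_distinct:
  assumes vs: "distinct vs" "successively points_to vs" "points_to (last vs) (hd vs)"
    and ij: "i < length vs" "j < length vs"
    and X: "X \<in> P" "{vs ! i, vs ! (Suc i mod length vs)} \<in> X"
      "{vs ! j, vs ! (Suc j mod length vs)} \<in> X"
  shows "i = j"
proof -
  have "points_to (vs ! k) (vs ! (Suc k mod length vs))" if "k < length vs" for k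
    using successively_closed_nth[OF vs(2,3) that] by simp
  then have "vs ! (Suc i mod length vs) = vs ! (Suc j mod length vs)"
    using points_to_same_class X ij by blast
  moreover have "0 < length vs" using ij by linarith
  then have "Suc i mod length vs < length vs" "Suc j mod length vs < length vs" by simp_all
  ultimately have "Suc i mod length vs = Suc j mod length vs"
    using vs(1) by (simp add: nth_eq_iff_index_eq)
  then show "i = j" using ij by (rule Suc_mod_inj[rotated 2])
qed

text \<open>The edges of a directed cycle have distinct heads, so they lie in distinct classes.\<close>

lemma no_points_to_cycle:
  assumes vs: "vs \<noteq> []" "distinct vs" "successively points_to vs" "points_to (last vs) (hd vs)"
  shows False
proof -
  define n where "n = length vs"
  define e where "e i = {vs ! i, vs ! (Suc i mod n)}" for i
  have step: "points_to (vs ! i) (vs ! (Suc i mod n))" if "i < n" for i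
    using successively_closed_nth[OF vs(3,4)] that unfolding n_def by simp
  have same_class: "i = j" if "i < n" "j < n" "X \<in> P" "e i \<in> X" "e j \<in> X" for i j X
    using points_to_cycle_classes_distinct[OF vs(2-4)] that unfolding e_def n_def by blast
  have e_E: "e i \<in> E" if "i < n" for i
    using points_to_edge[OF step[OF that]] unfolding e_def .
  have "n \<noteq> 1"
  proof
    assume "n = 1"
    then show False using points_to_neq[OF step[of 0]] by simp
  qed
  moreover have "n \<noteq> 2"
  proof
    assume "n = 2"
    then have "e 1 = e 0" unfolding e_def by (simp add: insert_commute)
    moreover obtain X where "X \<in> P" "e 0 \<in> X" using edge_in_class e_E[of 0] \<open>n = 2\<close> by auto
    ultimately show False using same_class[of 0 1 X] \<open>n = 2\<close> by simp
  qed
  moreover have "n \<noteq> 0" using vs(1) unfolding n_def by simp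
  ultimately have "3 \<le> length vs" unfolding n_def by linarith
  moreover have C: "cycle_edges vs = e ` {..<n}" unfolding cycle_edges_def e_def n_def by auto
  moreover have "e ` {..<n} \<subseteq> E" using e_E by blast
  ultimately have "is_cycle E (cycle_edges vs)" using vs(2) unfolding is_cycle_def by metis
  moreover have "card (cycle_edges vs \<inter> X) \<le> 1" if X: "X \<in> P" for X
  proof -
    have "c = d" if cd: "c \<in> e ` {..<n} \<inter> X" "d \<in> e ` {..<n} \<inter> X" for c d
    proof -
      obtain i j where "i < n" "j < n" "c = e i" "d = e j" "e i \<in> X" "e j \<in> X" using cd by auto
      then show "c = d" using same_class[OF _ _ X] by metis
    qed
    then have "card (e ` {..<n} \<inter> X) \<le> Suc 0" by (subst card_le_Suc0_iff_eq) auto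
    then show ?thesis unfolding C by simp
  qed
  ultimately show False using rainbow_free unfolding rainbow_circuit_free_def by blast
qed

lemma exists_pair_class:
  assumes "3 \<le> card V"
  shows "\<exists>X\<in>P. card X = 2"
proof (rule ccontr)
  assume no_pair: "\<not> (\<exists>X\<in>P. card X = 2)"
  have "card X \<le> 1" if "X \<in> P" for X
  proof -
    have "card X \<le> 2" "card X \<noteq> 2" using card_class_le_2 no_pair that by auto
    then show ?thesis by linarith
  qed
  then have "(\<Sum>X\<in>P. card X) \<le> (\<Sum>X\<in>P. 1)" by (intro sum_mono)
  then have "card E \<le> card P" using card_E_sum by simp
  then show False using card_E card_classes assms by linarith
qed

lemma degree_two_vertex:
  assumes "3 \<le> card V"
  shows "\<exists>w\<in>V. \<exists>X\<in>P. card X = 2 \<and> {e\<in>E. w \<in> e} = X"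
proof (rule ccontr)
  assume "\<not> ?thesis"
  then have not_deg2: "{e\<in>E. w \<in> e} \<noteq> X" if "w \<in> V" "X \<in> P" "card X = 2" for w X
    using that by metis
  define W where "W = {w\<in>V. \<exists>X\<in>P. card X = 2 \<and> common_vertex X w}"
  obtain X where X: "X \<in> P" "card X = 2" using exists_pair_class[OF assms] by blast
  obtain w where "w \<in> V" "common_vertex X w" using class_has_common_vertex[OF X(1)] by blast
  then have w: "w \<in> W" unfolding W_def using X by blast
  have fin: "finite W" unfolding W_def using finite_V by simp
  have succ: "\<exists>y\<in>W. points_to x y" if x: "x \<in> W" for x
  proof -
    obtain X where X: "x \<in> V" "X \<in> P" "card X = 2" "common_vertex X x" using x unfolding W_def by blast
    then obtain y where "y \<in> V" "points_to x y" using points_to_successor[OF X not_deg2[OF X(1-3)]] by blast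
    moreover have "y \<in> W" using calculation unfolding W_def points_to_def by blast
    ultimately show ?thesis by blast
  qed
  obtain vs where "vs \<noteq> []" "distinct vs" "set vs \<subseteq> W" "successively points_to vs"
    "points_to (last vs) (hd vs)"
    by (rule finite_successor_cycleE[OF fin w succ])
  then show False using no_points_to_cycle by blast
qed

lemma degree_two_vertex_edges:
  assumes "w \<in> V" "X \<in> P" "card X = 2" "{e\<in>E. w \<in> e} = X"
  obtains u v where "u \<in> V - {w}" "v \<in> V - {w}" "u \<noteq> v" "X = {{u, w}, {v, w}}"
proof -
  have other_end: "\<exists>u\<in>V - {w}. e = {u, w}" if "e \<in> X" for e
  proof -
    have "e \<in> E" "w \<in> e" using that assms(4) by auto
    then show ?thesis using simple_graph_edgeE[OF simple \<open>e \<in> E\<close>] by (metis DiffI insert_commute insertE singletonD)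
  qed
  obtain e e' where "X = {e, e'}" "e \<noteq> e'" using assms(3) by (meson card_2_iff)
  then show thesis using other_end that by (metis insertCI)
qed

lemma remove_degree_two_vertex:
  assumes "3 \<le> card V" "w \<in> V" "X \<in> P" "card X = 2" "{e\<in>E. w \<in> e} = X"
  shows "tight_rainbow_coloring (V - {w}) (E - X) (P - {X})"
proof
  have "\<exists>u v. u \<in> V - {w} \<and> v \<in> V - {w} \<and> u \<noteq> v \<and> e = {u, v}" if "e \<in> E - X" for e
  proof -
    have "w \<notin> e" using that assms(5) by blast
    then show ?thesis using simple_graph_edgeE[OF simple, of e] that by blast
  qed
  then show "simple_graph (V - {w}) (E - X)" unfolding simple_graph_def using finite_V by blast
  show "coloring (E - X) (P - {X})" using colors assms(3) by (rule coloring_Diff_class)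
  show "rainbow_circuit_free (E - X) (P - {X})" using rainbow_free by (rule rainbow_circuit_free_Diff_class)
  show "\<forall>Y\<in>P - {X}. card Y \<le> 2" using card_class_le_2 by blast
  have "card (E - X) = card E - 2" using class_subset assms(3,4) finite_class by (simp add: card_Diff_subset)
  moreover have "card (V - {w}) = card V - 1" using assms(2) by simp
  ultimately show "card (E - X) + 3 = 2 * card (V - {w})" using card_E assms(1) by linarith
qed

lemma two_vertices:
  assumes "card V = 2"
  obtains u v where "u \<noteq> v" "V = {u, v}" "E = {{u, v}}"
proof -
  have "card E = 1" using card_E assms by simp
  then obtain e where E: "E = {e}" using card_1_singletonE by blast
  then obtain u v where uv: "u \<in> V" "v \<in> V" "u \<noteq> v" "e = {u, v}"
    using simple_graph_edgeE[OF simple] by blast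
  then have "{u, v} \<subseteq> V" "card {u, v} = card V" using assms by auto
  then have "V = {u, v}" using card_subset_eq[OF finite_V] by blast
  then show thesis using that uv E by blast
qed

end

lemma tight_rainbow_coloring_H0_constructible:
  "tight_rainbow_coloring V E P \<Longrightarrow> H0_constructible V E"
proof (induction "card V" arbitrary: V E P rule: less_induct)
  case less
  interpret tight_rainbow_coloring V E P by (fact less.prems)
  have "card V = 2 \<or> 3 \<le> card V" using card_E by linarith
  then show ?case
  proof
    assume "card V = 2"
    then obtain u v where "u \<noteq> v" "V = {u, v}" "E = {{u, v}}" by (rule two_vertices)
    then show ?thesis using H0_constructible.K2 by simp
  next
    assume V: "3 \<le> card V"
    obtain w X where wX: "w \<in> V" "X \<in> P" "card X = 2" "{e\<in>E. w \<in> e} = X"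
      using degree_two_vertex[OF V] by blast
    obtain u v where uv: "u \<in> V - {w}" "v \<in> V - {w}" "u \<noteq> v" "X = {{u, w}, {v, w}}"
      using degree_two_vertex_edges[OF wX] by blast
    have "card (V - {w}) < card V" using finite_V wX(1) by (rule card_Diff1_less)
    then have "H0_constructible (V - {w}) (E - X)"
      using less.hyps remove_degree_two_vertex[OF V wX] by blast
    then have "H0_constructible (insert w (V - {w})) ((E - X) \<union> {{u, w}, {v, w}})"
      using uv by (intro H0_constructible.H0) auto
    moreover have "insert w (V - {w}) = V" "(E - X) \<union> X = E" using wX class_subset by auto
    ultimately show ?thesis using uv(4) by simp
  qed
qed

theorem theorem10:
  fixes V :: "'a set" and E :: "'a set set"
  assumes "simple_graph V E"
    and "card E + 3 = 2 * card V"
  shows "(\<exists>P. coloring E P \<and> rainbow_circuit_free E P \<and> (\<forall>X\<in>P. card X \<le> 2))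
         \<longleftrightarrow> H0_constructible V E"
proof
  assume "\<exists>P. coloring E P \<and> rainbow_circuit_free E P \<and> (\<forall>X\<in>P. card X \<le> 2)"
  then obtain P where "tight_rainbow_coloring V E P"
    using assms by (metis tight_rainbow_coloring.intro)
  then show "H0_constructible V E" by (rule tight_rainbow_coloring_H0_constructible)
next
  assume "H0_constructible V E"
  then show "\<exists>P. coloring E P \<and> rainbow_circuit_free E P \<and> (\<forall>X\<in>P. card X \<le> 2)"
    by (rule H0_constructible_rainbow_coloring)
qed

end
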